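(* Let $G$ be a 3-connected graph other than $K_{3,3}$, let $N$ be a maximal 3-chop of $G$, and let $\sigma$ be a splitting star of $N$ with torso $X$. If $X$ has at least five vertices, then $X$ is internally 4-connected.
   Context: All graphs are finite and simple. A separation of $G$ is an unordered pair $\{A,B\}$ with $A\cup B=V(G)$ and no edge between $A\setminus B$ and $B\setminus A$; its order is $|A\cap B|$; a 3-separation has order exactly 3; it is proper if $A\setminus B\ne\emptyset\ne B\setminus A$. For oriented separations, $(A,B)\le(C,D)$ iff $A\subseteq C$ and $B\supseteq D$. Two separations are nested if some orientations of them are $\le$-comparable; a nested set has pairwise nested elements. A star is a set $\sigma$ of oriented separations with $(A,B)\le(D,C)$ for all distinct $(A,B),(C,D)\in\sigma$; its bag is $\bigcap_{(A,B)\in\sigma}B$ ($=V(G)$ if $\sigma$ is empty); its torso is obtained from the subgraph induced on the bag by making each separator $A\cap B$, $(A,B)\in\sigma$, a clique. A splitting star of a set $S$ of separations is a star $\sigma$ of orientations of elements of $S$ such that every $\{C,D\}\in S$ has an orientation $\le$ some element of $\sigma$. A proper 3-separation $\{A,B\}$ of a 3-connected graph is claw-free if both $G[A]$ and $G[B]$ contain a cycle. A set of proper 3-separations is claw-freeable if it can be enumerated $s_0,\dots,s_n$ so that each $s_i$ is claw-free or shares at least two separator vertices with some $s_j$, $j<i$. A 3-chop of $G$ is a claw-freeable nested set of proper 3-separations of $G$; it is maximal if it is not a proper subset of another 3-chop of $G$. A graph is internally 4-connected if it is 3-connected, has more than four vertices, and every proper 3-separation $\{A,B\}$ has independent separator and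 satisfies $|A\setminus B|=1$ or $|B\setminus A|=1$. *)

theory Defs
  imports Main
begin

definition graph :: "'a set \<Rightarrow> ('a \<Rightarrow> 'a \<Rightarrow> bool) \<Rightarrow> bool" where
  "graph V E \<longleftrightarrow> finite V \<and> (\<forall>u v. E u v \<longrightarrow> u \<in> V \<and> v \<in> V \<and> u \<noteq> v \<and> E v u)"

definition connected_on :: "('a \<Rightarrow> 'a \<Rightarrow> bool) \<Rightarrow> 'a set \<Rightarrow> bool" where
  "connected_on E S \<longleftrightarrow> S \<noteq> {} \<and>
     (\<forall>u\<in>S. \<forall>v\<in>S. (\<lambda>x y. x \<in> S \<and> y \<in> S \<and> E x y)\<^sup>*\<^sup>* u v)"

definition k_connected :: "nat \<Rightarrow> 'a set \<Rightarrow> ('a \<Rightarrow> 'a \<Rightarrow> bool) \<Rightarrow> bool" where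
  "k_connected k V E \<longleftrightarrow> graph V E \<and> card V > k \<and>
     (\<forall>X. X \<subseteq> V \<and> card X < k \<longrightarrow> connected_on E (V - X))"

definition is_K33 :: "'a set \<Rightarrow> ('a \<Rightarrow> 'a \<Rightarrow> bool) \<Rightarrow> bool" where
  "is_K33 V E \<longleftrightarrow> (\<exists>X Y. X \<inter> Y = {} \<and> X \<union> Y = V \<and> card X = 3 \<and> card Y = 3 \<and>
     (\<forall>u\<in>V. \<forall>v\<in>V. E u v \<longleftrightarrow> (u \<in> X \<and> v \<in> Y \<or> u \<in> Y \<and> v \<in> X)))"

definition oriented_sep :: "'a set \<Rightarrow> ('a \<Rightarrow> 'a \<Rightarrow> bool) \<Rightarrow> 'a set \<times> 'a set \<Rightarrow> bool" where
  "oriented_sep V E AB \<longleftrightarrow> (case AB of (A, B) \<Rightarrow>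
     A \<union> B = V \<and> (\<forall>u\<in>A - B. \<forall>v\<in>B - A. \<not> E u v))"

definition separation :: "'a set \<Rightarrow> ('a \<Rightarrow> 'a \<Rightarrow> bool) \<Rightarrow> 'a set set \<Rightarrow> bool" where
  "separation V E s \<longleftrightarrow> (\<exists>A B. s = {A, B} \<and> oriented_sep V E (A, B))"

definition orientation_of :: "'a set \<times> 'a set \<Rightarrow> 'a set set \<Rightarrow> bool" where
  "orientation_of AB s \<longleftrightarrow> s = {fst AB, snd AB}"

definition separator :: "'a set set \<Rightarrow> 'a set" where
  "separator s = \<Inter> s"

definition proper_3sep :: "'a set \<Rightarrow> ('a \<Rightarrow> 'a \<Rightarrow> bool) \<Rightarrow> 'a set set \<Rightarrow> bool" where
  "proper_3sep V E s \<longleftrightarrow> (\<exists>A B. s = {A, B} \<and> oriented_sep V E (A, B) \<and>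
      card (A \<inter> B) = 3 \<and> A - B \<noteq> {} \<and> B - A \<noteq> {})"

definition sep_le :: "'a set \<times> 'a set \<Rightarrow> 'a set \<times> 'a set \<Rightarrow> bool" where
  "sep_le AB CD \<longleftrightarrow> fst AB \<subseteq> fst CD \<and> snd CD \<subseteq> snd AB"

definition nested :: "'a set set \<Rightarrow> 'a set set \<Rightarrow> bool" where
  "nested s t \<longleftrightarrow> (\<exists>AB CD. orientation_of AB s \<and> orientation_of CD t \<and> sep_le AB CD)"

definition nested_set :: "'a set set set \<Rightarrow> bool" where
  "nested_set N \<longleftrightarrow> (\<forall>s\<in>N. \<forall>t\<in>N. nested s t)"

definition has_cycle_in :: "('a \<Rightarrow> 'a \<Rightarrow> bool) \<Rightarrow> 'a set \<Rightarrow> bool" where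
  "has_cycle_in E S \<longleftrightarrow> (\<exists>xs. distinct xs \<and> length xs \<ge> 3 \<and> set xs \<subseteq> S \<and>
     (\<forall>i. Suc i < length xs \<longrightarrow> E (xs ! i) (xs ! Suc i)) \<and> E (last xs) (hd xs))"

definition claw_free_sep :: "'a set \<Rightarrow> ('a \<Rightarrow> 'a \<Rightarrow> bool) \<Rightarrow> 'a set set \<Rightarrow> bool" where
  "claw_free_sep V E s \<longleftrightarrow> proper_3sep V E s \<and>
     (\<exists>A B. s = {A, B} \<and> has_cycle_in E A \<and> has_cycle_in E B)"

definition claw_freeable :: "'a set \<Rightarrow> ('a \<Rightarrow> 'a \<Rightarrow> bool) \<Rightarrow> 'a set set set \<Rightarrow> bool" where
  "claw_freeable V E S \<longleftrightarrow> (\<forall>s\<in>S. proper_3sep V E s) \<and>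
     (\<exists>xs. distinct xs \<and> set xs = S \<and>
        (\<forall>i < length xs. claw_free_sep V E (xs ! i) \<or>
           (\<exists>j < i. card (separator (xs ! i) \<inter> separator (xs ! j)) \<ge> 2)))"

definition three_chop :: "'a set \<Rightarrow> ('a \<Rightarrow> 'a \<Rightarrow> bool) \<Rightarrow> 'a set set set \<Rightarrow> bool" where
  "three_chop V E N \<longleftrightarrow> claw_freeable V E N \<and> nested_set N"

definition maximal_three_chop :: "'a set \<Rightarrow> ('a \<Rightarrow> 'a \<Rightarrow> bool) \<Rightarrow> 'a set set set \<Rightarrow> bool" where
  "maximal_three_chop V E N \<longleftrightarrow> three_chop V E N \<and> \<not> (\<exists>N'. three_chop V E N' \<and> N \<subset> N')"

definition is_star :: "('a set \<times> 'a set) set \<Rightarrow> bool" where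
  "is_star \<sigma> \<longleftrightarrow> (\<forall>AB\<in>\<sigma>. \<forall>CD\<in>\<sigma>. AB \<noteq> CD \<longrightarrow> sep_le AB (snd CD, fst CD))"

definition splitting_star :: "'a set set set \<Rightarrow> ('a set \<times> 'a set) set \<Rightarrow> bool" where
  "splitting_star S \<sigma> \<longleftrightarrow> is_star \<sigma> \<and> (\<forall>AB\<in>\<sigma>. \<exists>s\<in>S. orientation_of AB s) \<and>
     (\<forall>s\<in>S. \<exists>CD. orientation_of CD s \<and> (\<exists>AB\<in>\<sigma>. sep_le CD AB))"

definition bag :: "'a set \<Rightarrow> ('a set \<times> 'a set) set \<Rightarrow> 'a set" where
  "bag V \<sigma> = V \<inter> (\<Inter>AB\<in>\<sigma>. snd AB)"

definition torso_edges :: "'a set \<Rightarrow> ('a \<Rightarrow> 'a \<Rightarrow> bool) \<Rightarrow> ('a set \<times> 'a set) set \<Rightarrow> 'a \<Rightarrow> 'a \<Rightarrow> bool" where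
  "torso_edges V E \<sigma> u v \<longleftrightarrow> u \<in> bag V \<sigma> \<and> v \<in> bag V \<sigma> \<and> u \<noteq> v \<and>
     (E u v \<or> (\<exists>AB\<in>\<sigma>. u \<in> fst AB \<inter> snd AB \<and> v \<in> fst AB \<inter> snd AB))"

definition internally_4_connected :: "'a set \<Rightarrow> ('a \<Rightarrow> 'a \<Rightarrow> bool) \<Rightarrow> bool" where
  "internally_4_connected V E \<longleftrightarrow> k_connected 3 V E \<and> card V > 4 \<and>
     (\<forall>A B. proper_3sep V E {A, B} \<and> oriented_sep V E (A, B) \<longrightarrow>
        (\<forall>u\<in>A \<inter> B. \<forall>v\<in>A \<inter> B. \<not> E u v) \<and> (card (A - B) = 1 \<or> card (B - A) = 1))"

end

theory Submission
  imports Defs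
begin

text \<open>
  Every separator of the star is a clique of the torso X, so walks in G avoiding a set of at most
  two bag vertices can be shadowed in X, and X inherits 3-connectivity from G.
  Given a proper 3-separation (C, D) of X, adding each region of the star to the side containing
  its separator lifts (C, D) to a proper 3-separation of G with the same separator which is nested
  with N but not in N. By maximality of N it cannot be added to N: it is not claw-free, and its
  separator meets every separator of N in at most one vertex. So one side of the lift induces a
  forest, and in a 3-connected graph degree counting forces such a side to be a single vertex
  joined to an independent separator. That separator stays independent in X, since a virtual edge
  of X would put two of its vertices into a separator of N.
\<close>

section \<open>Cycles and degree sums\<close>

definition degree_in :: "('a \<Rightarrow> 'a \<Rightarrow> bool) \<Rightarrow> 'a set \<Rightarrow> 'a \<Rightarrow> nat" where
  "degree_in E S v = card {u\<in>S. E v u}"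

definition path_in :: "('a \<Rightarrow> 'a \<Rightarrow> bool) \<Rightarrow> 'a set \<Rightarrow> 'a list \<Rightarrow> bool" where
  "path_in E S xs \<longleftrightarrow> xs \<noteq> [] \<and> distinct xs \<and> set xs \<subseteq> S \<and>
     (\<forall>i. Suc i < length xs \<longrightarrow> E (xs ! i) (xs ! Suc i))"

abbreviation induced :: "('a \<Rightarrow> 'a \<Rightarrow> bool) \<Rightarrow> 'a set \<Rightarrow> 'a \<Rightarrow> 'a \<Rightarrow> bool" where
  "induced E S \<equiv> \<lambda>x y. x \<in> S \<and> y \<in> S \<and> E x y"

lemma has_cycle_in_mono: "has_cycle_in E S \<Longrightarrow> S \<subseteq> T \<Longrightarrow> has_cycle_in E T"
  unfolding has_cycle_in_def by blast

lemma longest_path_in_exists: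
  assumes "finite S" and "S \<noteq> {}"
  obtains xs where "path_in E S xs" and "\<And>ys. path_in E S ys \<Longrightarrow> length ys \<le> length xs"
proof -
  obtain v where "v \<in> S" using assms(2) by blast
  then have "path_in E S [v]" by (simp add: path_in_def)
  moreover have "\<forall>ys. path_in E S ys \<longrightarrow> length ys < Suc (card S)"
    using assms(1) by (metis card_mono distinct_card less_Suc_eq_le path_in_def)
  ultimately show ?thesis using ex_has_greatest_nat[of "path_in E S" _ length] that by blast
qed

lemma path_in_Cons:
  assumes "path_in E S xs" and "u \<in> S" and "u \<notin> set xs" and "E u (hd xs)"
  shows "path_in E S (u # xs)"
  unfolding path_in_def
proof (intro conjI allI impI)
  fix i assume "Suc i < length (u # xs)"
  then show "E ((u # xs) ! i) ((u # xs) ! Suc i)"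
    using assms by (cases i) (auto simp: path_in_def hd_conv_nth)
qed (use assms in \<open>auto simp: path_in_def\<close>)

lemma has_cycle_in_if_path_chord:
  assumes sym: "\<And>u v. E u v \<Longrightarrow> E v u"
    and "path_in E S xs" and "2 \<le> j" and "j < length xs" and "E (hd xs) (xs ! j)"
  shows "has_cycle_in E S"
proof -
  let ?ys = "take (Suc j) xs"
  have "last ?ys = xs ! j" using assms(4) by (simp add: take_Suc_conv_app_nth)
  then show ?thesis
    using assms unfolding has_cycle_in_def path_in_def
    by (intro exI[of _ ?ys]) (auto dest: in_set_takeD)
qed

lemma has_cycle_in_if_min_degree:
  assumes sym: "\<And>u v. E u v \<Longrightarrow> E v u" and irrefl: "\<And>u. \<not> E u u"
    and "finite S" and "S \<noteq> {}" and min_deg: "\<And>v. v \<in> S \<Longrightarrow> 2 \<le> degree_in E S v"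
  shows "has_cycle_in E S"
proof -
  obtain xs where xs: "path_in E S xs" and longest: "\<And>ys. path_in E S ys \<Longrightarrow> length ys \<le> length xs"
    using longest_path_in_exists[OF assms(3,4)] by blast
  let ?x = "hd xs"
  have "?x \<in> S" using xs by (auto simp: path_in_def)
  text \<open>A longest path cannot be extended at its start, so all neighbours of its start lie on it.\<close>
  have nbrs_on_path: "{u\<in>S. E ?x u} \<subseteq> set xs"
  proof
    fix u assume u: "u \<in> {u\<in>S. E ?x u}"
    show "u \<in> set xs"
    proof (rule ccontr)
      assume "u \<notin> set xs"
      then have "path_in E S (u # xs)" using path_in_Cons xs u sym by fastforce
      then show False using longest by fastforce
    qed
  qed
  have "\<not> {u\<in>S. E ?x u} \<subseteq> {xs ! 1}"
    using min_deg[OF \<open>?x \<in> S\<close>] card_mono[of "{xs ! 1}" "{u\<in>S. E ?x u}"]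
    by (auto simp: degree_in_def)
  then obtain u where u: "u \<in> S" "E ?x u" "u \<noteq> xs ! 1" by blast
  then have "u \<in> set xs" using nbrs_on_path by blast
  then obtain j where j: "j < length xs" "xs ! j = u" by (metis in_set_conv_nth)
  have "j \<noteq> 0" using j u irrefl xs by (metis hd_conv_nth path_in_def)
  moreover have "j \<noteq> 1" using j u by auto
  ultimately have "2 \<le> j" by simp
  then show ?thesis using has_cycle_in_if_path_chord[OF sym xs _ j(1)] j u by simp
qed

lemma degree_in_remove:
  assumes "finite S"
  shows "degree_in E S u = degree_in E (S - {v}) u + (if v \<in> S \<and> E u v then 1 else 0)"
proof (cases "v \<in> S \<and> E u v")
  case True
  then have "{w\<in>S. E u w} = insert v {w\<in>S - {v}. E u w}" by blast
  then show ?thesis using True assms by (simp add: degree_in_def)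
next
  case False
  then have "{w\<in>S. E u w} = {w\<in>S - {v}. E u w}" by blast
  then show ?thesis using False by (simp add: degree_in_def)
qed

lemma degree_sum_remove:
  assumes sym: "\<And>u v. E u v \<Longrightarrow> E v u" and irrefl: "\<And>u. \<not> E u u"
    and "finite S" and "v \<in> S"
  shows "(\<Sum>u\<in>S. degree_in E S u) = (\<Sum>u\<in>S - {v}. degree_in E (S - {v}) u) + 2 * degree_in E S v"
proof -
  have "(\<Sum>u\<in>S - {v}. if E u v then 1 else 0::nat) = card {u\<in>S - {v}. E u v}"
    using assms(3) by (simp add: sum.If_cases Int_def)
  also have "{u\<in>S - {v}. E u v} = {u\<in>S. E v u}" using sym irrefl by blast
  finally have "(\<Sum>u\<in>S - {v}. if E u v then 1 else 0::nat) = degree_in E S v"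
    by (simp add: degree_in_def)
  moreover have "(\<Sum>u\<in>S - {v}. degree_in E S u)
      = (\<Sum>u\<in>S - {v}. degree_in E (S - {v}) u + (if E u v then 1 else 0))"
    using assms(4) degree_in_remove[OF assms(3), of E _ v] by (intro sum.cong) auto
  then have "(\<Sum>u\<in>S - {v}. degree_in E S u)
      = (\<Sum>u\<in>S - {v}. degree_in E (S - {v}) u) + (\<Sum>u\<in>S - {v}. if E u v then 1 else 0)"
    by (simp add: sum.distrib)
  ultimately show ?thesis using assms(3,4) by (simp add: sum.remove)
qed

lemma degree_sum_le_if_acyclic:
  assumes sym: "\<And>u v. E u v \<Longrightarrow> E v u" and irrefl: "\<And>u. \<not> E u u"
  shows "finite S \<Longrightarrow> S \<noteq> {} \<Longrightarrow> \<not> has_cycle_in E S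
    \<Longrightarrow> (\<Sum>v\<in>S. degree_in E S v) \<le> 2 * (card S - 1)"
proof (induction "card S" arbitrary: S rule: less_induct)
  case less
  obtain v where v: "v \<in> S" "degree_in E S v \<le> 1"
    using has_cycle_in_if_min_degree[of E S, OF sym irrefl less.prems(1,2)] less.prems(3) by force
  show ?case
  proof (cases "S = {v}")
    case True
    then show ?thesis using irrefl by (simp add: degree_in_def)
  next
    case False
    then have "S - {v} \<noteq> {}" using v(1) by blast
    have "card S = Suc (card (S - {v}))"
      using card_Suc_Diff1[OF less.prems(1) v(1)] by simp
    moreover have "\<not> has_cycle_in E (S - {v})"
      using less.prems(3) has_cycle_in_mono[OF _ Diff_subset] by blast
    ultimately have "(\<Sum>u\<in>S - {v}. degree_in E (S - {v}) u) \<le> 2 * (card (S - {v}) - 1)"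
      using less.hyps less.prems(1) \<open>S - {v} \<noteq> {}\<close> by simp
    moreover have "card (S - {v}) \<noteq> 0" using \<open>S - {v} \<noteq> {}\<close> less.prems(1) by simp
    ultimately show ?thesis
      using degree_sum_remove[of E, OF sym irrefl less.prems(1) v(1)] v(2) \<open>card S = _\<close> by linarith
  qed
qed

section \<open>Separations and 3-chops\<close>

lemma oriented_sep_swap:
  assumes "graph V E" and "oriented_sep V E (A, B)"
  shows "oriented_sep V E (B, A)"
  using assms by (auto simp: oriented_sep_def graph_def)

lemma oriented_sep_if_separation:
  assumes "graph V E" and "separation V E {A, B}"
  shows "oriented_sep V E (A, B)"
proof -
  obtain A' B' where "{A, B} = {A', B'}" and "oriented_sep V E (A', B')"
    using assms(2) by (auto simp: separation_def)
  then show ?thesis using oriented_sep_swap[OF assms(1)] by (auto simp: doubleton_eq_iff)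
qed

lemma proper_3sep_doubleton:
  assumes "proper_3sep V E {A, B}"
  shows "card (A \<inter> B) = 3" and "A - B \<noteq> {}" and "B - A \<noteq> {}"
  using assms by (auto simp: proper_3sep_def doubleton_eq_iff Int_commute)

lemma separation_if_proper_3sep: "proper_3sep V E s \<Longrightarrow> separation V E s"
  by (auto simp: proper_3sep_def separation_def)

lemma nested_sym:
  assumes "nested s t"
  shows "nested t s"
proof -
  obtain A B C D where "s = {A, B}" "t = {C, D}" "sep_le (A, B) (C, D)"
    using assms by (auto simp: nested_def orientation_of_def)
  then have "orientation_of (D, C) t" "orientation_of (B, A) s" "sep_le (D, C) (B, A)"
    by (auto simp: orientation_of_def sep_le_def)
  then show ?thesis unfolding nested_def by blast
qed

lemma nested_set_insert:
  assumes "nested_set N" and "nested s s" and "\<And>t. t \<in> N \<Longrightarrow> nested s t"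
  shows "nested_set (insert s N)"
  using assms nested_sym unfolding nested_set_def by blast

lemma claw_freeable_insert:
  assumes N: "claw_freeable V E N" and s: "proper_3sep V E s" "s \<notin> N"
    and new: "claw_free_sep V E s \<or> (\<exists>t\<in>N. 2 \<le> card (separator s \<inter> separator t))"
  shows "claw_freeable V E (insert s N)"
proof -
  obtain xs where xs: "distinct xs" "set xs = N"
    and ok: "\<And>i. i < length xs \<Longrightarrow> claw_free_sep V E (xs ! i) \<or>
        (\<exists>j < i. 2 \<le> card (separator (xs ! i) \<inter> separator (xs ! j)))"
    using N by (auto simp: claw_freeable_def)
  let ?ys = "xs @ [s]"
  have "claw_free_sep V E (?ys ! i) \<or> (\<exists>j < i. 2 \<le> card (separator (?ys ! i) \<inter> separator (?ys ! j)))"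
    if i: "i < length ?ys" for i
  proof (cases "i < length xs")
    case True
    then have "?ys ! i = xs ! i" and "\<And>j. j < i \<Longrightarrow> ?ys ! j = xs ! j"
      by (simp_all add: nth_append)
    then show ?thesis using ok[OF True] by auto
  next
    case False
    then have "?ys ! i = s" and "\<And>j. j < i \<Longrightarrow> ?ys ! j = xs ! j"
      using i by (simp_all add: nth_append)
    moreover have "\<exists>j < i. 2 \<le> card (separator s \<inter> separator (xs ! j))"
      if "\<exists>t\<in>N. 2 \<le> card (separator s \<inter> separator t)"
      using that xs(2) False i by (metis in_set_conv_nth less_Suc_eq length_append_singleton)
    ultimately show ?thesis using new by (metis (no_types, lifting))
  qed
  moreover have "distinct ?ys" and "set ?ys = insert s N" using xs s(2) by auto
  moreover have "\<forall>t\<in>insert s N. proper_3sep V E t" using N s(1) by (simp add: claw_freeable_def)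
  ultimately show ?thesis unfolding claw_freeable_def by blast
qed

lemma maximal_three_chop_rejects:
  assumes max: "maximal_three_chop V E N" and s: "proper_3sep V E s" "s \<notin> N"
    and nested: "nested s s" "\<And>t. t \<in> N \<Longrightarrow> nested s t"
  shows "\<not> claw_free_sep V E s" and "\<And>t. t \<in> N \<Longrightarrow> card (separator s \<inter> separator t) < 2"
proof -
  have "three_chop V E N" using max by (simp add: maximal_three_chop_def)
  then have "nested_set (insert s N)" and "claw_freeable V E N"
    using nested_set_insert nested by (auto simp: three_chop_def)
  moreover have "\<not> three_chop V E (insert s N)"
    using max s(2) by (auto simp: maximal_three_chop_def)
  ultimately have "\<not> (claw_free_sep V E s \<or> (\<exists>t\<in>N. 2 \<le> card (separator s \<inter> separator t)))"
    using claw_freeable_insert[OF _ s] by (auto simp: three_chop_def)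
  then show "\<not> claw_free_sep V E s" and "\<And>t. t \<in> N \<Longrightarrow> card (separator s \<inter> separator t) < 2"
    by auto
qed

section \<open>3-connected graphs\<close>

locale three_connected =
  fixes V :: "'a set" and E :: "'a \<Rightarrow> 'a \<Rightarrow> bool"
  assumes three_connected: "k_connected 3 V E"
begin

lemma graph: "graph V E"
  using three_connected by (simp add: k_connected_def)

lemma finite_V: "finite V"
  using graph by (simp add: graph_def)

lemma edge_in_V: "E u v \<Longrightarrow> u \<in> V \<and> v \<in> V"
  using graph by (simp add: graph_def)

lemma edge_sym: "E u v \<Longrightarrow> E v u"
  using graph by (simp add: graph_def)

lemma edge_irrefl: "\<not> E u u"
  using graph by (auto simp: graph_def)

lemma connected_Diff: "X \<subseteq> V \<Longrightarrow> card X < 3 \<Longrightarrow> connected_on E (V - X)"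
  using three_connected by (simp add: k_connected_def)

lemma three_le_degree:
  assumes "v \<in> V"
  shows "3 \<le> card {u. E v u}"
proof (rule ccontr)
  let ?nbrs = "{u. E v u}"
  assume "\<not> ?thesis"
  then have small: "card ?nbrs < 3" by simp
  have nbrs_V: "?nbrs \<subseteq> V" using edge_in_V by blast
  moreover have "3 < card V" using three_connected by (simp add: k_connected_def)
  ultimately have "card (V - ?nbrs) \<ge> 2"
    using small finite_V by (simp add: card_Diff_subset finite_subset)
  then have "\<not> V - ?nbrs \<subseteq> {v}" using card_mono[of "{v}" "V - ?nbrs"] by auto
  moreover have v: "v \<in> V - ?nbrs" using assms edge_irrefl by simp
  ultimately obtain z where z: "z \<in> V - ?nbrs" "z \<noteq> v" by blast
  have "(induced E (V - ?nbrs))\<^sup>*\<^sup>* v z"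
    using connected_Diff[OF nbrs_V small] v z by (simp add: connected_on_def)
  then show False
    by (cases rule: converse_rtranclpE) (use z in auto)
qed

lemma separator_vertex_has_neighbour_in_side:
  assumes sep: "oriented_sep V E (X, Y)" and order: "card (X \<inter> Y) \<le> 3"
    and "X - Y \<noteq> {}" and "Y - X \<noteq> {}" and t: "t \<in> X \<inter> Y"
  shows "\<exists>w\<in>X - Y. E t w"
proof -
  let ?S = "X \<inter> Y - {t}"
  obtain w0 z where w0: "w0 \<in> X - Y" and z: "z \<in> Y - X" using assms(3,4) by blast
  have S_V: "?S \<subseteq> V" using sep by (auto simp: oriented_sep_def)
  then have "card ?S < 3" using order t finite_V by (simp add: finite_subset)
  then have "(induced E (V - ?S))\<^sup>*\<^sup>* w0 z"
    using connected_Diff[OF S_V] w0 z sep by (auto simp: connected_on_def oriented_sep_def)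
  text \<open>A walk from X - Y to Y - X avoiding X \<inter> Y - {t} leaves X - Y through t.\<close>
  then have "z \<in> X - Y \<or> (\<exists>w\<in>X - Y. E t w)"
  proof (induction rule: rtranclp_induct)
    case base
    then show ?case using w0 by simp
  next
    case (step b c)
    show ?case
    proof (cases "\<exists>w\<in>X - Y. E t w")
      case False
      then have b: "b \<in> X - Y" using step.IH by simp
      then have "c \<in> X" using step.hyps(2) sep by (auto simp: oriented_sep_def)
      then show ?thesis using b step.hyps(2) edge_sym by blast
    qed simp
  qed
  then show ?thesis using z by blast
qed

lemma degree_in_side_interior:
  assumes sep: "oriented_sep V E (X, Y)" and w: "w \<in> X - Y"
  shows "3 \<le> degree_in E X w"
proof -
  have "{u\<in>X. E w u} = {u. E w u}"
    using sep w edge_in_V by (auto simp: oriented_sep_def)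
  then show ?thesis
    using three_le_degree[of w] w sep by (auto simp: degree_in_def oriented_sep_def)
qed

lemma acyclic_side_of_3_separation:
  assumes sep: "oriented_sep V E (X, Y)" and order: "card (X \<inter> Y) = 3"
    and "X - Y \<noteq> {}" and "Y - X \<noteq> {}" and acyclic: "\<not> has_cycle_in E X"
  shows "card (X - Y) = 1" and "\<forall>u\<in>X \<inter> Y. \<forall>v\<in>X \<inter> Y. \<not> E u v"
proof -
  let ?W = "X - Y" and ?T = "X \<inter> Y"
  let ?inner = "\<lambda>t. card {u\<in>?T. E t u}"
  have fin: "finite X" using sep finite_V by (auto simp: oriented_sep_def finite_subset)
  have sep_degree: "1 + ?inner t \<le> degree_in E X t" if t: "t \<in> ?T" for t
  proof -
    obtain w where w: "w \<in> ?W" "E t w"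
      using separator_vertex_has_neighbour_in_side[OF sep _ assms(3,4) t] order by auto
    have "card (insert w {u\<in>?T. E t u}) \<le> card {u\<in>X. E t u}"
      using w fin by (intro card_mono) auto
    then show ?thesis using w fin by (simp add: degree_in_def)
  qed
  text \<open>In the forest G[X] the degree sum is at most 2(|W| + 2), but it is at least
    3|W| + 3 plus twice the number of edges inside T.\<close>
  have "(\<Sum>v\<in>X. degree_in E X v) \<le> 2 * (card X - 1)"
    using degree_sum_le_if_acyclic[of E X] edge_sym edge_irrefl fin acyclic assms(3) by blast
  moreover have "?W \<inter> ?T = {}" by blast
  then have "card X = card ?W + 3"
    using fin order card_Un_disjoint[of ?W ?T] by (simp add: Un_Diff_Int)
  moreover have "(\<Sum>v\<in>X. degree_in E X v) = (\<Sum>v\<in>?W. degree_in E X v) + (\<Sum>v\<in>?T. degree_in E X v)"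
    using fin by (subst sum.union_disjoint[symmetric]) (auto intro: sum.cong)
  moreover have "3 * card ?W \<le> (\<Sum>v\<in>?W. degree_in E X v)"
    using sum_bounded_below[of ?W 3 "degree_in E X"] degree_in_side_interior[OF sep] by (simp add: mult.commute)
  moreover have "(\<Sum>t\<in>?T. 1 + ?inner t) \<le> (\<Sum>v\<in>?T. degree_in E X v)"
    using sep_degree by (rule sum_mono)
  then have "3 + (\<Sum>t\<in>?T. ?inner t) \<le> (\<Sum>v\<in>?T. degree_in E X v)"
    using order by (simp only: sum.distrib) simp
  moreover have "card ?W \<noteq> 0" using assms(3) fin by simp
  ultimately have W: "card ?W = 1" and inner: "(\<Sum>t\<in>?T. ?inner t) = 0" by linarith+
  show "card ?W = 1" by (fact W)
  show "\<forall>u\<in>?T. \<forall>v\<in>?T. \<not> E u v"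
  proof (intro ballI notI)
    fix u v assume "u \<in> ?T" "v \<in> ?T" "E u v"
    then have "?inner u \<noteq> 0" using fin by auto
    moreover have "?inner u \<le> (\<Sum>t\<in>?T. ?inner t)"
      using \<open>u \<in> ?T\<close> fin by (intro member_le_sum) auto
    ultimately show False using inner by linarith
  qed
qed

end

section \<open>The torso of a splitting star\<close>

locale star_of_separations =
  fixes V :: "'a set" and E :: "'a \<Rightarrow> 'a \<Rightarrow> bool"
    and N :: "'a set set set" and \<sigma> :: "('a set \<times> 'a set) set"
  assumes graph: "graph V E"
    and separations: "\<And>s. s \<in> N \<Longrightarrow> separation V E s"
    and splitting: "splitting_star N \<sigma>"
begin

lemma star_in_N: "(A, B) \<in> \<sigma> \<Longrightarrow> {A, B} \<in> N"
  using splitting by (fastforce simp: splitting_star_def orientation_of_def)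

lemma star_oriented_sep: "(A, B) \<in> \<sigma> \<Longrightarrow> oriented_sep V E (A, B)"
  using oriented_sep_if_separation[OF graph] separations star_in_N by blast

lemma star_le: "(A, B) \<in> \<sigma> \<Longrightarrow> (C, D) \<in> \<sigma> \<Longrightarrow> (A, B) \<noteq> (C, D) \<Longrightarrow> A \<subseteq> D \<and> C \<subseteq> B"
  using splitting unfolding splitting_star_def is_star_def sep_le_def by fastforce

lemma star_neighbour_in_fst:
  assumes "(A, B) \<in> \<sigma>" and "v \<in> A - B" and "E v u \<or> E u v"
  shows "u \<in> A"
  using star_oriented_sep[OF assms(1)] assms(2,3) graph by (auto simp: oriented_sep_def graph_def)

lemma bag_subset_V: "bag V \<sigma> \<subseteq> V"
  by (auto simp: bag_def)

lemma bag_subset_snd: "(A, B) \<in> \<sigma> \<Longrightarrow> bag V \<sigma> \<subseteq> B"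
  by (auto simp: bag_def)

lemma star_separator_subset_bag:
  assumes "(A, B) \<in> \<sigma>"
  shows "A \<inter> B \<subseteq> bag V \<sigma>"
proof -
  have "A \<inter> B \<subseteq> D" if "(C, D) \<in> \<sigma>" for C D
    using star_le[OF assms that] by (cases "(A, B) = (C, D)") auto
  moreover have "A \<inter> B \<subseteq> V" using star_oriented_sep[OF assms] by (auto simp: oriented_sep_def)
  ultimately show ?thesis by (force simp: bag_def)
qed

lemma outside_bag_region:
  assumes "v \<in> V" and "v \<notin> bag V \<sigma>"
  obtains A B where "(A, B) \<in> \<sigma>" and "v \<in> A - B"
proof -
  obtain A B where "(A, B) \<in> \<sigma>" and "v \<notin> B" using assms by (auto simp: bag_def)
  moreover have "A \<union> B = V" using star_oriented_sep[OF \<open>(A, B) \<in> \<sigma>\<close>] by (simp add: oriented_sep_def)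
  ultimately show ?thesis using that assms(1) by blast
qed

lemma region_unique:
  "(A, B) \<in> \<sigma> \<Longrightarrow> (A', B') \<in> \<sigma> \<Longrightarrow> v \<in> A - B \<Longrightarrow> v \<in> A' - B' \<Longrightarrow> (A', B') = (A, B)"
  using star_le[of A B A' B'] by blast

lemma graph_torso: "graph (bag V \<sigma>) (torso_edges V E \<sigma>)"
  using graph bag_subset_V by (auto simp: graph_def torso_edges_def intro: finite_subset)

text \<open>The invariant along walks of G - Y: a vertex of the bag is reached in the torso minus Y,
  a vertex outside the bag is represented by some vertex of the separator of its region.\<close>
definition torso_reaches :: "'a set \<Rightarrow> 'a \<Rightarrow> 'a \<Rightarrow> bool" where
  "torso_reaches Y u v \<longleftrightarrow>
     (v \<in> bag V \<sigma> \<longrightarrow> (induced (torso_edges V E \<sigma>) (bag V \<sigma> - Y))\<^sup>*\<^sup>* u v) \<and>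
     (\<forall>A B. (A, B) \<in> \<sigma> \<and> v \<in> A - B \<longrightarrow>
        (\<exists>y\<in>A \<inter> B - Y. (induced (torso_edges V E \<sigma>) (bag V \<sigma> - Y))\<^sup>*\<^sup>* u y))"

lemma torso_reaches_refl: "u \<in> bag V \<sigma> - Y \<Longrightarrow> torso_reaches Y u u"
  using bag_subset_snd by (auto simp: torso_reaches_def)

lemma torso_reaches_step:
  assumes reach: "torso_reaches Y u z" and z: "z \<in> V - Y" and z': "z' \<in> V - Y" and edge: "E z z'"
  shows "torso_reaches Y u z'"
proof -
  let ?R = "induced (torso_edges V E \<sigma>) (bag V \<sigma> - Y)"
  have reach_bag: "z \<in> bag V \<sigma> \<Longrightarrow> ?R\<^sup>*\<^sup>* u z"
    and reach_region: "\<And>A B. (A, B) \<in> \<sigma> \<Longrightarrow> z \<in> A - B \<Longrightarrow> \<exists>y\<in>A \<inter> B - Y. ?R\<^sup>*\<^sup>* u y"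
    using reach unfolding torso_reaches_def by blast+
  have "z \<noteq> z'" using edge graph by (auto simp: graph_def)
  have in_bag: "?R\<^sup>*\<^sup>* u z'" if z'_bag: "z' \<in> bag V \<sigma>"
  proof (cases "z \<in> bag V \<sigma>")
    case True
    then have "?R z z'" using z z' z'_bag edge \<open>z \<noteq> z'\<close> by (simp add: torso_edges_def)
    with reach_bag[OF True] show ?thesis by (rule rtranclp.rtrancl_into_rtrancl)
  next
    case False
    then obtain A B where AB: "(A, B) \<in> \<sigma>" "z \<in> A - B" using outside_bag_region z by blast
    then obtain y where y: "y \<in> A \<inter> B - Y" "?R\<^sup>*\<^sup>* u y" using reach_region by blast
    have "z' \<in> A" using star_neighbour_in_fst[OF AB, of z'] edge by blast
    moreover have "z' \<in> B" using bag_subset_snd[OF AB(1)] z'_bag by blast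
    ultimately have "z' \<in> A \<inter> B" by blast
    then have "\<exists>CD\<in>\<sigma>. y \<in> fst CD \<inter> snd CD \<and> z' \<in> fst CD \<inter> snd CD"
      using AB(1) y(1) by force
    then have "y = z' \<or> ?R y z'"
      using y(1) z' z'_bag star_separator_subset_bag[OF AB(1)] by (auto simp: torso_edges_def)
    then show ?thesis using y(2) by (auto intro: rtranclp.rtrancl_into_rtrancl)
  qed
  have in_region: "\<exists>y\<in>A \<inter> B - Y. ?R\<^sup>*\<^sup>* u y" if AB: "(A, B) \<in> \<sigma>" "z' \<in> A - B" for A B
  proof (cases "z \<in> bag V \<sigma>")
    case True
    have "z \<in> A" using star_neighbour_in_fst[OF AB, of z] edge by blast
    moreover have "z \<in> B" using bag_subset_snd[OF AB(1)] True by blast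
    ultimately have "z \<in> A \<inter> B - Y" using z by blast
    then show ?thesis using reach_bag[OF True] by blast
  next
    case False
    have "z \<in> A" using star_neighbour_in_fst[OF AB, of z] edge by blast
    then have "z \<in> A - B" using star_separator_subset_bag[OF AB(1)] False by blast
    then show ?thesis using reach_region[OF AB(1)] by blast
  qed
  show ?thesis unfolding torso_reaches_def using in_bag in_region by blast
qed

lemma connected_on_torso:
  assumes conn: "connected_on E (V - Y)" and "bag V \<sigma> - Y \<noteq> {}"
  shows "connected_on (torso_edges V E \<sigma>) (bag V \<sigma> - Y)"
  unfolding connected_on_def
proof (intro conjI ballI)
  fix u v assume u: "u \<in> bag V \<sigma> - Y" and v: "v \<in> bag V \<sigma> - Y"
  have "(induced E (V - Y))\<^sup>*\<^sup>* u v" using conn u v bag_subset_V by (auto simp: connected_on_def)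
  then have "torso_reaches Y u v"
  proof (induction rule: rtranclp_induct)
    case base
    show ?case using u by (rule torso_reaches_refl)
  next
    case (step z z')
    then show ?case using torso_reaches_step by blast
  qed
  then show "(induced (torso_edges V E \<sigma>) (bag V \<sigma> - Y))\<^sup>*\<^sup>* u v"
    using v by (simp add: torso_reaches_def)
qed (fact assms(2))

lemma three_connected_torso:
  assumes "k_connected 3 V E" and "3 < card (bag V \<sigma>)"
  shows "k_connected 3 (bag V \<sigma>) (torso_edges V E \<sigma>)"
  unfolding k_connected_def
proof (intro conjI allI impI)
  fix Y assume Y: "Y \<subseteq> bag V \<sigma> \<and> card Y < 3"
  have "bag V \<sigma> - Y \<noteq> {}"
  proof
    assume "bag V \<sigma> - Y = {}"
    then have "card (bag V \<sigma>) \<le> card Y"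
      using Y graph_torso by (intro card_mono) (auto simp: graph_def finite_subset)
    then show False using Y assms(2) by linarith
  qed
  moreover have "connected_on E (V - Y)"
    using assms(1) Y bag_subset_V unfolding k_connected_def by blast
  ultimately show "connected_on (torso_edges V E \<sigma>) (bag V \<sigma> - Y)"
    by (rule connected_on_torso[rotated])
qed (use graph_torso assms(2) in auto)

end

section \<open>Lifting a separation of the torso\<close>

locale torso_separation = star_of_separations +
  fixes C D :: "'a set"
  assumes torso_sep: "oriented_sep (bag V \<sigma>) (torso_edges V E \<sigma>) (C, D)"
begin

lemma sides_subset_bag: "C \<subseteq> bag V \<sigma>" "D \<subseteq> bag V \<sigma>"
  using torso_sep by (auto simp: oriented_sep_def)

lemma star_separator_in_side:
  assumes "(A, B) \<in> \<sigma>"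
  shows "A \<inter> B \<subseteq> C \<or> A \<inter> B \<subseteq> D"
proof (rule ccontr)
  assume "\<not> ?thesis"
  then obtain u v where u: "u \<in> A \<inter> B" "u \<notin> C" and v: "v \<in> A \<inter> B" "v \<notin> D" by blast
  moreover have "u \<in> bag V \<sigma>" "v \<in> bag V \<sigma>" using u v star_separator_subset_bag[OF assms] by auto
  ultimately have "u \<in> D - C" "v \<in> C - D" using torso_sep by (auto simp: oriented_sep_def)
  moreover have "torso_edges V E \<sigma> v u"
    using u v \<open>u \<in> bag V \<sigma>\<close> \<open>v \<in> bag V \<sigma>\<close> calculation assms
    by (auto simp: torso_edges_def intro!: bexI[of _ "(A, B)"])
  ultimately show False using torso_sep by (auto simp: oriented_sep_def)
qed

text \<open>Every region of the star is added to the side containing its separator; regions whose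
  separator lies in C \<inter> D go to D.\<close>
definition lifted_C :: "'a set" where
  "lifted_C = C \<union> {v\<in>V. \<exists>A B. (A, B) \<in> \<sigma> \<and> v \<in> A - B \<and> A \<inter> B \<subseteq> C \<and> \<not> A \<inter> B \<subseteq> D}"

definition lifted_D :: "'a set" where
  "lifted_D = D \<union> {v\<in>V. \<exists>A B. (A, B) \<in> \<sigma> \<and> v \<in> A - B \<and> A \<inter> B \<subseteq> D}"

lemma lifted_in_region:
  assumes AB: "(A, B) \<in> \<sigma>" and v: "v \<in> A - B"
  shows "v \<in> lifted_C \<longleftrightarrow> A \<inter> B \<subseteq> C \<and> \<not> A \<inter> B \<subseteq> D"
    and "v \<in> lifted_D \<longleftrightarrow> A \<inter> B \<subseteq> D"
proof -
  have "v \<notin> C" "v \<notin> D" "v \<in> V"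
    using v sides_subset_bag bag_subset_snd[OF AB] star_oriented_sep[OF AB]
    by (auto simp: oriented_sep_def)
  then show "v \<in> lifted_C \<longleftrightarrow> A \<inter> B \<subseteq> C \<and> \<not> A \<inter> B \<subseteq> D"
    and "v \<in> lifted_D \<longleftrightarrow> A \<inter> B \<subseteq> D"
    using region_unique[OF AB _ v] AB v unfolding lifted_C_def lifted_D_def by blast+
qed

lemma lifted_in_bag:
  assumes "v \<in> bag V \<sigma>"
  shows "v \<in> lifted_C \<longleftrightarrow> v \<in> C" and "v \<in> lifted_D \<longleftrightarrow> v \<in> D"
  using assms bag_subset_snd by (auto simp: lifted_C_def lifted_D_def)

lemma lifted_Un: "lifted_C \<union> lifted_D = V"
proof
  show "lifted_C \<union> lifted_D \<subseteq> V"
    using sides_subset_bag bag_subset_V unfolding lifted_C_def lifted_D_def by blast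
next
  show "V \<subseteq> lifted_C \<union> lifted_D"
  proof
    fix v assume "v \<in> V"
    show "v \<in> lifted_C \<union> lifted_D"
    proof (cases "v \<in> bag V \<sigma>")
      case True
      then have "v \<in> C \<union> D" using torso_sep by (simp add: oriented_sep_def)
      then show ?thesis using lifted_in_bag[OF True] by blast
    next
      case False
      then obtain A B where AB: "(A, B) \<in> \<sigma>" "v \<in> A - B" using outside_bag_region \<open>v \<in> V\<close> by blast
      show ?thesis
        using star_separator_in_side[OF AB(1)] by (cases "A \<inter> B \<subseteq> D") (simp_all add: lifted_in_region[OF AB])
    qed
  qed
qed

lemma lifted_Int: "lifted_C \<inter> lifted_D = C \<inter> D"
proof
  show "C \<inter> D \<subseteq> lifted_C \<inter> lifted_D" by (auto simp: lifted_C_def lifted_D_def)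
next
  show "lifted_C \<inter> lifted_D \<subseteq> C \<inter> D"
  proof
    fix v assume v: "v \<in> lifted_C \<inter> lifted_D"
    then have "v \<in> V" using lifted_Un by blast
    show "v \<in> C \<inter> D"
    proof (cases "v \<in> bag V \<sigma>")
      case True
      then show ?thesis using v lifted_in_bag by blast
    next
      case False
      then obtain A B where "(A, B) \<in> \<sigma>" "v \<in> A - B" using outside_bag_region \<open>v \<in> V\<close> by blast
      then show ?thesis using lifted_in_region v by blast
    qed
  qed
qed

lemma lifted_Diff: "C - D \<subseteq> lifted_C - lifted_D" "D - C \<subseteq> lifted_D - lifted_C"
  using sides_subset_bag lifted_in_bag by blast+

lemma lifted_no_edge:
  assumes u: "u \<in> lifted_C - lifted_D" and v: "v \<in> lifted_D - lifted_C"
  shows "\<not> E u v"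
proof
  assume edge: "E u v"
  then have "u \<in> V" "v \<in> V" "u \<noteq> v" using graph by (auto simp: graph_def)
  consider (both) "u \<in> bag V \<sigma>" "v \<in> bag V \<sigma>"
    | (u_out) A B where "(A, B) \<in> \<sigma>" "u \<in> A - B"
    | (v_out) A B where "(A, B) \<in> \<sigma>" "v \<in> A - B"
    using outside_bag_region \<open>u \<in> V\<close> \<open>v \<in> V\<close> by metis
  then show False
  proof cases
    case both
    then have "u \<in> C - D" "v \<in> D - C" using u v lifted_in_bag by auto
    moreover have "torso_edges V E \<sigma> u v" using both edge \<open>u \<noteq> v\<close> by (simp add: torso_edges_def)
    ultimately show False using torso_sep by (auto simp: oriented_sep_def)
  next
    case u_out
    have sep: "A \<inter> B \<subseteq> C" "\<not> A \<inter> B \<subseteq> D" using lifted_in_region[OF u_out] u by auto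
    have "v \<in> A" using star_neighbour_in_fst[OF u_out] edge by blast
    show False
    proof (cases "v \<in> B")
      case True
      then have "v \<in> bag V \<sigma>" using \<open>v \<in> A\<close> star_separator_subset_bag[OF u_out(1)] by blast
      then show False using sep True \<open>v \<in> A\<close> v lifted_in_bag by blast
    next
      case False
      then show False using lifted_in_region[OF u_out(1)] \<open>v \<in> A\<close> sep v by blast
    qed
  next
    case v_out
    have sep: "A \<inter> B \<subseteq> D" using lifted_in_region[OF v_out] v by auto
    have "u \<in> A" using star_neighbour_in_fst[OF v_out] edge by blast
    show False
    proof (cases "u \<in> B")
      case True
      then have "u \<in> bag V \<sigma>" using \<open>u \<in> A\<close> star_separator_subset_bag[OF v_out(1)] by blast
      then show False using sep True \<open>u \<in> A\<close> u lifted_in_bag by blast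
    next
      case False
      then show False using lifted_in_region[OF v_out(1)] \<open>u \<in> A\<close> sep u by blast
    qed
  qed
qed

lemma lifted_oriented_sep: "oriented_sep V E (lifted_C, lifted_D)"
  using lifted_Un lifted_no_edge by (simp add: oriented_sep_def)

lemma star_sides_if_separator_in_D:
  assumes AB: "(A, B) \<in> \<sigma>" and sep: "A \<inter> B \<subseteq> D"
  shows "A \<subseteq> lifted_D" and "lifted_C \<subseteq> B"
proof -
  show "A \<subseteq> lifted_D"
    using sep lifted_in_region(2)[OF AB] by (auto simp: lifted_D_def)
  show "lifted_C \<subseteq> B"
  proof
    fix v assume v: "v \<in> lifted_C"
    show "v \<in> B"
    proof (cases "v \<in> C")
      case True
      then show ?thesis using sides_subset_bag bag_subset_snd[OF AB] by blast
    next
      case False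
      then obtain A' B' where "(A', B') \<in> \<sigma>" "v \<in> A' - B'" "\<not> A' \<inter> B' \<subseteq> D"
        using v by (auto simp: lifted_C_def)
      then show ?thesis using star_le[OF _ AB] sep by blast
    qed
  qed
qed

lemma star_sides_if_separator_not_in_D:
  assumes AB: "(A, B) \<in> \<sigma>" and sep: "\<not> A \<inter> B \<subseteq> D"
  shows "A \<subseteq> lifted_C" and "lifted_D \<subseteq> B"
proof -
  have "A \<inter> B \<subseteq> C" using star_separator_in_side[OF AB] sep by blast
  then show "A \<subseteq> lifted_C"
    using sep lifted_in_region(1)[OF AB] by (auto simp: lifted_C_def)
  show "lifted_D \<subseteq> B"
  proof
    fix v assume v: "v \<in> lifted_D"
    show "v \<in> B"
    proof (cases "v \<in> D")
      case True
      then show ?thesis using sides_subset_bag bag_subset_snd[OF AB] by blast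
    next
      case False
      then obtain A' B' where "(A', B') \<in> \<sigma>" "v \<in> A' - B'" "A' \<inter> B' \<subseteq> D"
        using v by (auto simp: lifted_D_def)
      then show ?thesis using star_le[OF _ AB] sep by blast
    qed
  qed
qed

lemma lifted_nested:
  assumes "t \<in> N"
  shows "nested {lifted_C, lifted_D} t"
proof -
  obtain T AB where T: "orientation_of T t" and AB: "AB \<in> \<sigma>" and le: "sep_le T AB"
    using splitting assms unfolding splitting_star_def by blast
  obtain A B T1 T2 where [simp]: "AB = (A, B)" "T = (T1, T2)" by fastforce
  have t: "t = {T2, T1}" and sub: "T1 \<subseteq> A" "B \<subseteq> T2"
    using T le by (auto simp: orientation_of_def sep_le_def)
  have "sep_le (lifted_C, lifted_D) (T2, T1) \<or> sep_le (lifted_D, lifted_C) (T2, T1)"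
  proof (cases "A \<inter> B \<subseteq> D")
    case True
    then show ?thesis using star_sides_if_separator_in_D[of A B] AB sub by (auto simp: sep_le_def)
  next
    case False
    then show ?thesis using star_sides_if_separator_not_in_D[of A B] AB sub by (auto simp: sep_le_def)
  qed
  then show ?thesis
    unfolding t by (auto simp: nested_def orientation_of_def insert_commute)
qed

lemma lifted_not_in:
  assumes "C - D \<noteq> {}" and "D - C \<noteq> {}"
  shows "{lifted_C, lifted_D} \<notin> N"
proof
  assume "{lifted_C, lifted_D} \<in> N"
  then obtain X Y A B where "{X, Y} = {lifted_C, lifted_D}" and AB: "(A, B) \<in> \<sigma>" and "B \<subseteq> Y"
    using splitting by (force simp: splitting_star_def orientation_of_def sep_le_def)
  then have "bag V \<sigma> \<subseteq> lifted_C \<or> bag V \<sigma> \<subseteq> lifted_D"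
    using bag_subset_snd[OF AB] by (auto simp: doubleton_eq_iff)
  then show False using assms lifted_Diff sides_subset_bag by blast
qed

lemma torso_separator_independent:
  assumes indep: "\<forall>u\<in>C \<inter> D. \<forall>v\<in>C \<inter> D. \<not> E u v"
    and few_common: "\<And>t. t \<in> N \<Longrightarrow> card (separator {lifted_C, lifted_D} \<inter> separator t) < 2"
  shows "\<forall>u\<in>C \<inter> D. \<forall>v\<in>C \<inter> D. \<not> torso_edges V E \<sigma> u v"
proof (intro ballI notI)
  fix u v assume u: "u \<in> C \<inter> D" and v: "v \<in> C \<inter> D" and edge: "torso_edges V E \<sigma> u v"
  have "\<not> E u v" using indep u v by blast
  then obtain A B where AB: "(A, B) \<in> \<sigma>" and uv: "u \<in> A \<inter> B" "v \<in> A \<inter> B" "u \<noteq> v"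
    using edge unfolding torso_edges_def by auto
  let ?common = "separator {lifted_C, lifted_D} \<inter> separator {A, B}"
  have "A \<inter> B \<subseteq> V" using star_oriented_sep[OF AB] by (auto simp: oriented_sep_def)
  then have "finite ?common" using graph finite_subset by (auto simp: graph_def separator_def)
  moreover have "{u, v} \<subseteq> ?common" using u v uv lifted_Int by (simp add: separator_def)
  ultimately have "card {u, v} \<le> card ?common" by (rule card_mono)
  then show False using few_common[OF star_in_N[OF AB]] uv(3) by simp
qed

lemma torso_proper_3_separation:
  assumes conn: "k_connected 3 V E" and max: "maximal_three_chop V E N"
    and order: "card (C \<inter> D) = 3" and C: "C - D \<noteq> {}" and D: "D - C \<noteq> {}"
  shows "\<forall>u\<in>C \<inter> D. \<forall>v\<in>C \<inter> D. \<not> torso_edges V E \<sigma> u v"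
    and "card (C - D) = 1 \<or> card (D - C) = 1"
proof -
  interpret three_connected V E using conn by (rule three_connected.intro)
  let ?s = "{lifted_C, lifted_D}"
  have lifted_C: "lifted_C - lifted_D \<noteq> {}" and lifted_D: "lifted_D - lifted_C \<noteq> {}"
    using C D lifted_Diff by blast+
  have order': "card (lifted_C \<inter> lifted_D) = 3" using order lifted_Int by simp
  have proper: "proper_3sep V E ?s"
    using lifted_oriented_sep order' lifted_C lifted_D unfolding proper_3sep_def by blast
  have "nested ?s ?s" unfolding nested_def orientation_of_def sep_le_def
    by (intro exI[of _ "(lifted_C, lifted_D)"]) auto
  note rejected = maximal_three_chop_rejects[OF max proper lifted_not_in[OF C D] this lifted_nested]
  text \<open>The lifted separation is not claw-free, so one of its sides is acyclic and hence a claw.\<close>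
  have "\<not> has_cycle_in E lifted_C \<or> \<not> has_cycle_in E lifted_D"
    using rejected(1) proper by (auto simp: claw_free_sep_def)
  then have "(card (lifted_C - lifted_D) = 1 \<or> card (lifted_D - lifted_C) = 1) \<and>
      (\<forall>u\<in>C \<inter> D. \<forall>v\<in>C \<inter> D. \<not> E u v)"
    using acyclic_side_of_3_separation[OF lifted_oriented_sep order' lifted_C lifted_D]
      acyclic_side_of_3_separation[OF oriented_sep_swap[OF graph lifted_oriented_sep]]
      order' lifted_C lifted_D lifted_Int by (auto simp: Int_commute)
  then show "\<forall>u\<in>C \<inter> D. \<forall>v\<in>C \<inter> D. \<not> torso_edges V E \<sigma> u v"
    and "card (C - D) = 1 \<or> card (D - C) = 1"
    using torso_separator_independent rejected(2) lifted_Diff C D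
    by (auto simp: card_1_singleton_iff subset_singleton_iff)
qed

end

theorem mainTheorem7:
  fixes V :: "'a set" and E :: "'a \<Rightarrow> 'a \<Rightarrow> bool"
    and N :: "'a set set set" and \<sigma> :: "('a set \<times> 'a set) set"
  assumes "k_connected 3 V E"
    and "\<not> is_K33 V E"
    and "maximal_three_chop V E N"
    and "splitting_star N \<sigma>"
    and "card (bag V \<sigma>) \<ge> 5"
  shows "internally_4_connected (bag V \<sigma>) (torso_edges V E \<sigma>)"
proof -
  interpret three_connected V E using assms(1) by (rule three_connected.intro)
  have "\<And>s. s \<in> N \<Longrightarrow> separation V E s"
    using assms(3) separation_if_proper_3sep
    by (auto simp: maximal_three_chop_def three_chop_def claw_freeable_def)
  then interpret star_of_separations V E N \<sigma> using graph assms(4) by unfold_locales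
  show ?thesis
    unfolding internally_4_connected_def
  proof (intro conjI allI impI)
    show "k_connected 3 (bag V \<sigma>) (torso_edges V E \<sigma>)"
      using three_connected_torso assms(1,5) by simp
    fix A B
    assume sep: "proper_3sep (bag V \<sigma>) (torso_edges V E \<sigma>) {A, B} \<and>
      oriented_sep (bag V \<sigma>) (torso_edges V E \<sigma>) (A, B)"
    then interpret torso_separation V E N \<sigma> A B by unfold_locales blast
    show "\<forall>u\<in>A \<inter> B. \<forall>v\<in>A \<inter> B. \<not> torso_edges V E \<sigma> u v"
      and "card (A - B) = 1 \<or> card (B - A) = 1"
      using torso_proper_3_separation[OF assms(1,3)] proper_3sep_doubleton sep by blast+
  qed (use assms(5) in simp)
qed

end
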